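(* Let $G$ be a finite abelian group with uniform probability measure $\mu$ and dual group $\hat G$, and let $\mathcal F = \{\mathrm{Re}\,u_\gamma, \mathrm{Im}\,u_\gamma : \gamma\in\hat G\}$. If $R$ is a degree-$d$ Riesz $\mathcal F$-product, then $\mathrm{Spec}_0(R) = \{\gamma\in\hat G : \hat R(\gamma)\neq0\}$ is $d$-covered.
   Context: For $\gamma\in\hat G$, $u_\gamma : G\to\mathbb C$ is the corresponding character (so $u_\gamma u_{\gamma'} = u_{\gamma+\gamma'}$ and $|u_\gamma|\le1$). Every $f:G\to\mathbb C$ is written $f=\sum_{\gamma\in\hat G}\hat f(\gamma)u_\gamma$. A degree-$d$ Riesz $\mathcal F$-product is a function $R(x)=\prod_{i=1}^d(1+\epsilon_i\varphi_i(x))$ with $\varphi_i\in\mathcal F$, $\epsilon_i\in\{-1,0,1\}$. A subset $S\subseteq\hat G$ is covered by $\Lambda\subseteq\hat G$ if $S\subseteq\{\sum_{\lambda\in\Lambda}\epsilon_\lambda\lambda : \epsilon_\lambda\in\{-1,0,1\}\}$ (the empty sum being the identity $0$), and $S$ is $d$-covered if it is covered by some $\Lambda\subseteq\hat G$ with $|\Lambda|\le d$. *)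

theory Defs
  imports Complex_Main
begin

text \<open>Its dual group is the set of characters, i.e. homomorphisms into the unit circle;
  the group operation of the dual (written additively in the paper) is pointwise
  multiplication, and the inverse of a character is its pointwise inverse (= conjugate).\<close>

definition character :: "('a::ab_group_add \<Rightarrow> complex) \<Rightarrow> bool" where
  "character u \<longleftrightarrow> (\<forall>x y. u (x + y) = u x * u y) \<and> (\<forall>x. cmod (u x) = 1)"

text \<open>Fourier coefficient with respect to the uniform probability measure:
  f = sum over gamma of (fourier f gamma) * u_gamma.\<close>

definition fourier :: "('a::{finite,ab_group_add} \<Rightarrow> complex) \<Rightarrow> ('a \<Rightarrow> complex) \<Rightarrow> complex" where
  "fourier f u = (\<Sum>x\<in>UNIV. f x * cnj (u x)) / of_nat (card (UNIV :: 'a set))"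

definition riesz_family :: "('a::ab_group_add \<Rightarrow> real) set" where
  "riesz_family = {\<phi>. \<exists>u. character u \<and> (\<phi> = (\<lambda>x. Re (u x)) \<or> \<phi> = (\<lambda>x. Im (u x)))}"

definition riesz_product :: "nat \<Rightarrow> ('a::ab_group_add \<Rightarrow> real) \<Rightarrow> bool" where
  "riesz_product d R \<longleftrightarrow>
     (\<exists>\<phi> :: nat \<Rightarrow> 'a \<Rightarrow> real. \<exists>\<epsilon> :: nat \<Rightarrow> int.
        (\<forall>i<d. \<phi> i \<in> riesz_family \<and> \<epsilon> i \<in> {-1, 0, 1}) \<and>
        R = (\<lambda>x. \<Prod>i<d. 1 + of_int (\<epsilon> i) * \<phi> i x))"

definition spec0 :: "('a::{finite,ab_group_add} \<Rightarrow> real) \<Rightarrow> ('a \<Rightarrow> complex) set" where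
  "spec0 R = {u. character u \<and> fourier (\<lambda>x. complex_of_real (R x)) u \<noteq> 0}"

definition covered_by :: "('a \<Rightarrow> complex) set \<Rightarrow> ('a \<Rightarrow> complex) set \<Rightarrow> bool" where
  "covered_by S \<Lambda> \<longleftrightarrow>
     S \<subseteq> {(\<lambda>x. \<Prod>l\<in>\<Lambda>. (l x) powi (\<epsilon> l)) | \<epsilon> :: ('a \<Rightarrow> complex) \<Rightarrow> int.
              \<forall>l\<in>\<Lambda>. \<epsilon> l \<in> {-1, 0, 1}}"

definition d_covered :: "nat \<Rightarrow> ('a::ab_group_add \<Rightarrow> complex) set \<Rightarrow> bool" where
  "d_covered d S \<longleftrightarrow>
     (\<exists>\<Lambda>. finite \<Lambda> \<and> card \<Lambda> \<le> d \<and> (\<forall>l\<in>\<Lambda>. character l) \<and> covered_by S \<Lambda>)"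

end

theory Submission
  imports Defs
begin

text \<open>Since Re u = (u + u^-1)/2 and Im u = (u - u^-1)/2i, every factor of a Riesz product is a
  trinomial 1 + c u + c' u^-1 in a character u. Expanding, R is a linear combination of the
  monomials u_1^e_1 ... u_d^e_d with all e_i in {-1, 0, 1}, so by orthogonality of characters its
  spectrum consists of such monomials. These are covered by d characters, built one factor at
  a time: if the new character a already occurs as a, a^2, ..., a^k in the covering set (with
  these powers distinct), adding a^(k+1) suffices, because signed sums of 1, ..., k + 1 realise
  every integer of absolute value at most (k + 1)(k + 2)/2; and if instead a^(k+1) = 1, all
  powers of a are already available.\<close>

lemma character_nonzero: "character u \<Longrightarrow> u x \<noteq> 0"
  unfolding character_def by (metis norm_zero zero_neq_one)

lemma character_cnj:
  assumes "character u"
  shows "cnj (u x) = u x powi -1"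
proof -
  have "u x * cnj (u x) = 1"
    using assms complex_norm_square[of "u x"] unfolding character_def by simp
  then show ?thesis
    using character_nonzero[OF assms] by (simp add: power_int_minus field_simps)
qed

lemma character_one: "character (\<lambda>x. 1)"
  unfolding character_def by simp

lemma character_mult_power_int:
  assumes "character w" "character u"
  shows "character (\<lambda>x. w x * u x powi e)"
  using assms unfolding character_def
  by (simp add: power_int_mult_distrib norm_mult norm_power_int)

lemma fourier_orthogonal:
  fixes w v :: "'a::{finite,ab_group_add} \<Rightarrow> complex"
  assumes "character w" "character v" "w \<noteq> v"
  shows "fourier w v = 0"
proof -
  define \<chi> where "\<chi> = (\<lambda>x. w x * cnj (v x))"
  have \<chi>_add: "\<chi> (x + y) = \<chi> x * \<chi> y" for x y
    using assms(1,2) unfolding character_def \<chi>_def by simp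
  obtain y where "w y \<noteq> v y" using assms(3) by blast
  moreover have "cnj (v y) * v y = 1"
    using complex_norm_square[of "v y"] assms(2) unfolding character_def
    by (simp add: mult.commute)
  then have "w y = \<chi> y * v y" by (simp add: \<chi>_def mult.assoc)
  ultimately have "\<chi> y \<noteq> 1" by auto
  have "(\<Sum>x\<in>UNIV. \<chi> x) = (\<Sum>x\<in>UNIV. \<chi> (x + y))"
    by (rule sum.reindex_bij_witness[of _ "\<lambda>x. x + y" "\<lambda>x. x - y"]) auto
  also have "\<dots> = \<chi> y * (\<Sum>x\<in>UNIV. \<chi> x)"
    by (simp add: \<chi>_add sum_distrib_left mult.commute)
  finally have "(1 - \<chi> y) * (\<Sum>x\<in>UNIV. \<chi> x) = 0" by (simp add: algebra_simps)
  then have "(\<Sum>x\<in>UNIV. \<chi> x) = 0" using \<open>\<chi> y \<noteq> 1\<close> by simp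
  then show ?thesis unfolding fourier_def \<chi>_def by simp
qed

lemma fourier_mult:
  "fourier (\<lambda>x. f x * w x) v = fourier f (\<lambda>x. v x * cnj (w x))"
  unfolding fourier_def by (simp add: ac_simps)

lemma fourier_trinomial:
  "fourier (\<lambda>x. f x * (1 + c * u x + c' * u x powi -1)) v =
     fourier f v + c * fourier (\<lambda>x. f x * u x) v + c' * fourier (\<lambda>x. f x * u x powi -1) v"
  unfolding fourier_def
  by (simp add: algebra_simps sum.distrib sum_distrib_left add_divide_distrib)

lemma riesz_family_trinomial:
  assumes "\<phi> \<in> riesz_family"
  obtains u c c' where "character u"
    "\<And>x. complex_of_real (1 + t * \<phi> x) = 1 + c * u x + c' * u x powi -1"
proof -
  obtain u where u: "character u" and "\<phi> = (\<lambda>x. Re (u x)) \<or> \<phi> = (\<lambda>x. Im (u x))"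
    using assms unfolding riesz_family_def by blast
  from this(2) show thesis
  proof
    assume \<phi>: "\<phi> = (\<lambda>x. Re (u x))"
    have "complex_of_real (Re (u x)) = (u x + u x powi -1) / 2" for x
      using complex_add_cnj[of "u x"] character_cnj[OF u, of x] by simp
    then have "complex_of_real (1 + t * \<phi> x) = 1 + (t / 2) * u x + (t / 2) * u x powi -1" for x
      by (simp add: \<phi> algebra_simps add_divide_distrib)
    then show thesis using that[OF u] by blast
  next
    assume \<phi>: "\<phi> = (\<lambda>x. Im (u x))"
    have "complex_of_real (Im (u x)) = (u x - u x powi -1) / (2 * \<i>)" for x
      using complex_diff_cnj[of "u x"] character_cnj[OF u, of x] by (simp add: field_simps)
    then have "complex_of_real (1 + t * \<phi> x) =
        1 + (t / (2 * \<i>)) * u x + (- t / (2 * \<i>)) * u x powi -1" for x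
      by (simp add: \<phi> right_diff_distrib diff_divide_distrib mult.left_commute mult.assoc)
    then show thesis using that[OF u] by blast
  qed
qed

fun signed_monomials :: "(nat \<Rightarrow> 'a \<Rightarrow> complex) \<Rightarrow> nat \<Rightarrow> ('a \<Rightarrow> complex) set" where
  "signed_monomials U 0 = {\<lambda>x. 1}"
| "signed_monomials U (Suc n) =
     {(\<lambda>x. w x * U n x powi e) | w e. w \<in> signed_monomials U n \<and> e \<in> {-1, 0, 1}}"

lemma fourier_prod_trinomials:
  fixes U :: "nat \<Rightarrow> 'a::{finite,ab_group_add} \<Rightarrow> complex"
  assumes "\<forall>i<n. character (U i)" "character v" "v \<notin> signed_monomials U n"
  shows "fourier (\<lambda>x. \<Prod>i<n. 1 + c i * U i x + c' i * U i x powi -1) v = 0"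
  using assms
proof (induction n arbitrary: v)
  case 0
  then show ?case using fourier_orthogonal[OF character_one] by auto
next
  case (Suc n)
  let ?P = "\<lambda>x. \<Prod>i<n. 1 + c i * U i x + c' i * U i x powi -1"
  have u: "character (U n)" using Suc.prems(1) by simp
  have shifted: "fourier (\<lambda>x. ?P x * U n x powi e) v = 0" if "e \<in> {-1, 0, 1}" for e
  proof -
    define v' where "v' = (\<lambda>x. v x * U n x powi (- e))"
    have "v = (\<lambda>x. v' x * U n x powi e)"
      using character_nonzero[OF u] by (simp add: v'_def fun_eq_iff power_int_minus)
    then have "v' \<notin> signed_monomials U n" using Suc.prems(3) that by auto
    moreover have "character v'"
      unfolding v'_def using Suc.prems(2) u by (rule character_mult_power_int)
    ultimately have "fourier ?P v' = 0" using Suc.IH Suc.prems(1) by simp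
    moreover have "(\<lambda>x. v x * cnj (U n x powi e)) = v'"
      using character_cnj[OF u] by (simp add: v'_def fun_eq_iff power_int_minus power_int_inverse)
    ultimately show ?thesis by (simp add: fourier_mult)
  qed
  have "fourier (\<lambda>x. ?P x * (1 + c n * U n x + c' n * U n x powi -1)) v = 0"
    unfolding fourier_trinomial using shifted[of 0] shifted[of 1] shifted[of "-1"] by simp
  then show ?case by (simp add: mult.commute)
qed

definition signed_products :: "('a \<Rightarrow> complex) set \<Rightarrow> ('a \<Rightarrow> complex) set" where
  "signed_products \<Lambda> = {(\<lambda>x. \<Prod>l\<in>\<Lambda>. (l x) powi (\<epsilon> l)) | \<epsilon> :: ('a \<Rightarrow> complex) \<Rightarrow> int.
      \<forall>l\<in>\<Lambda>. \<epsilon> l \<in> {-1, 0, 1}}"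

lemma covered_by_iff_subset_signed_products: "covered_by S \<Lambda> \<longleftrightarrow> S \<subseteq> signed_products \<Lambda>"
  unfolding covered_by_def signed_products_def by simp

lemma signed_products_mult:
  assumes "finite A" "finite B" "A \<inter> B = {}" "s \<in> signed_products A" "t \<in> signed_products B"
  shows "(\<lambda>x. s x * t x) \<in> signed_products (A \<union> B)"
proof -
  obtain \<epsilon>\<^sub>A where A: "\<forall>l\<in>A. \<epsilon>\<^sub>A l \<in> {-1, 0, 1}" "s = (\<lambda>x. \<Prod>l\<in>A. (l x) powi (\<epsilon>\<^sub>A l))"
    using assms(4) unfolding signed_products_def by blast
  obtain \<epsilon>\<^sub>B where B: "\<forall>l\<in>B. \<epsilon>\<^sub>B l \<in> {-1, 0, 1}" "t = (\<lambda>x. \<Prod>l\<in>B. (l x) powi (\<epsilon>\<^sub>B l))"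
    using assms(5) unfolding signed_products_def by blast
  define \<epsilon> where "\<epsilon> = (\<lambda>l. if l \<in> A then \<epsilon>\<^sub>A l else \<epsilon>\<^sub>B l)"
  have "s x * t x = (\<Prod>l\<in>A \<union> B. (l x) powi (\<epsilon> l))" for x
  proof -
    have "s x = (\<Prod>l\<in>A. (l x) powi (\<epsilon> l))" using A by (simp add: \<epsilon>_def)
    moreover have "t x = (\<Prod>l\<in>B. (l x) powi (\<epsilon> l))"
      using B assms(3) by (auto simp: \<epsilon>_def intro!: prod.cong)
    ultimately show ?thesis using assms(1-3) by (simp add: prod.union_disjoint)
  qed
  moreover have "\<forall>l\<in>A \<union> B. \<epsilon> l \<in> {-1, 0, 1}" using A B by (auto simp: \<epsilon>_def)
  ultimately show ?thesis unfolding signed_products_def by blast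
qed

lemma signed_products_split:
  assumes "finite \<Lambda>" "M \<subseteq> \<Lambda>" "s \<in> signed_products \<Lambda>"
  obtains t m where "t \<in> signed_products (\<Lambda> - M)" "m \<in> signed_products M" "s = (\<lambda>x. t x * m x)"
proof -
  obtain \<epsilon> where \<epsilon>: "\<forall>l\<in>\<Lambda>. \<epsilon> l \<in> {-1, 0, 1}" "s = (\<lambda>x. \<Prod>l\<in>\<Lambda>. (l x) powi (\<epsilon> l))"
    using assms(3) unfolding signed_products_def by blast
  have "s = (\<lambda>x. (\<Prod>l\<in>\<Lambda> - M. (l x) powi (\<epsilon> l)) * (\<Prod>l\<in>M. (l x) powi (\<epsilon> l)))"
    using \<epsilon>(2) by (simp add: fun_eq_iff prod.subset_diff[OF assms(2,1)])
  moreover have "(\<lambda>x. \<Prod>l\<in>\<Lambda> - M. (l x) powi (\<epsilon> l)) \<in> signed_products (\<Lambda> - M)"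
    using \<epsilon>(1) unfolding signed_products_def by blast
  moreover have "(\<lambda>x. \<Prod>l\<in>M. (l x) powi (\<epsilon> l)) \<in> signed_products M"
    using \<epsilon>(1) assms(2) unfolding signed_products_def by blast
  ultimately show thesis using that by blast
qed

lemma signed_products_mono:
  assumes "finite B" "A \<subseteq> B"
  shows "signed_products A \<subseteq> signed_products B"
proof
  fix s assume "s \<in> signed_products A"
  then obtain \<epsilon> where \<epsilon>: "\<forall>l\<in>A. \<epsilon> l \<in> {-1, 0, 1}" "s = (\<lambda>x. \<Prod>l\<in>A. (l x) powi (\<epsilon> l))"
    unfolding signed_products_def by blast
  define \<epsilon>' where "\<epsilon>' = (\<lambda>l. if l \<in> A then \<epsilon> l else 0)"
  have "s = (\<lambda>x. \<Prod>l\<in>B. (l x) powi (\<epsilon>' l))"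
    using \<epsilon>(2) assms by (auto simp: fun_eq_iff \<epsilon>'_def if_distrib prod.If_cases Int_absorb1)
  moreover have "\<forall>l\<in>B. \<epsilon>' l \<in> {-1, 0, 1}" using \<epsilon>(1) by (simp add: \<epsilon>'_def)
  ultimately show "s \<in> signed_products B" unfolding signed_products_def by blast
qed

lemma signed_products_image:
  assumes "inj_on g I"
  shows "signed_products (g ` I) =
    {(\<lambda>x. \<Prod>i\<in>I. (g i x) powi (f i)) | f :: _ \<Rightarrow> int. \<forall>i\<in>I. f i \<in> {-1, 0, 1}}"
    (is "_ = ?R")
proof
  show "signed_products (g ` I) \<subseteq> ?R"
    unfolding signed_products_def using prod.reindex[OF assms] by fastforce
next
  show "?R \<subseteq> signed_products (g ` I)"
  proof
    fix s assume "s \<in> ?R"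
    then obtain f where f: "\<forall>i\<in>I. f i \<in> {-1, 0, 1}" "s = (\<lambda>x. \<Prod>i\<in>I. (g i x) powi (f i))"
      by blast
    define \<epsilon> where "\<epsilon> = f \<circ> the_inv_into I g"
    have "s = (\<lambda>x. \<Prod>l\<in>g ` I. (l x) powi (\<epsilon> l))"
      using f(2) by (simp add: prod.reindex[OF assms] \<epsilon>_def the_inv_into_f_f[OF assms])
    moreover have "\<forall>l\<in>g ` I. \<epsilon> l \<in> {-1, 0, 1}"
      using f(1) by (auto simp: \<epsilon>_def the_inv_into_f_f[OF assms])
    ultimately show "s \<in> signed_products (g ` I)" unfolding signed_products_def by blast
  qed
qed

lemma abs_signed_sum_le:
  assumes "\<forall>j\<in>{1..k}. f j \<in> {-1, 0, 1::int}"
  shows "2 * \<bar>\<Sum>j=1..k. int j * f j\<bar> \<le> int k * (int k + 1)"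
proof -
  have "\<bar>\<Sum>j=1..k. int j * f j\<bar> \<le> (\<Sum>j=1..k. \<bar>int j * f j\<bar>)" by (rule sum_abs)
  also have "\<dots> \<le> (\<Sum>j=1..k. int j)"
  proof (rule sum_mono)
    fix j assume "j \<in> {1..k}"
    then have "f j \<in> {-1, 0, 1}" using assms by blast
    then show "\<bar>int j * f j\<bar> \<le> int j" by (auto simp: abs_mult)
  qed
  also have "2 * \<dots> = int k * (int k + 1)"
    by (induction k) (simp_all add: algebra_simps)
  finally show ?thesis by simp
qed

lemma ex_signed_sum_eq:
  assumes "2 * \<bar>r\<bar> \<le> int k * (int k + 1)"
  shows "\<exists>f. (\<forall>j\<in>{1..k}. f j \<in> {-1, 0, 1::int}) \<and> r = (\<Sum>j=1..k. int j * f j)"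
  using assms
proof (induction k arbitrary: r)
  case 0
  then show ?case by simp
next
  case (Suc k)
  define \<sigma> where "\<sigma> = (if 2 * \<bar>r\<bar> \<le> int k * (int k + 1) then 0 else sgn r)"
  have "k = 0 \<or> int k + 1 \<le> int k * (int k + 1)" by (cases k) (auto simp: algebra_simps)
  then have "2 * \<bar>r - \<sigma> * (int k + 1)\<bar> \<le> int k * (int k + 1)"
    using Suc.prems unfolding \<sigma>_def by (auto simp: sgn_if abs_if algebra_simps)
  then obtain f where f: "\<forall>j\<in>{1..k}. f j \<in> {-1, 0, 1}"
    "r - \<sigma> * (int k + 1) = (\<Sum>j=1..k. int j * f j)"
    using Suc.IH by blast
  have "(\<Sum>j=1..Suc k. int j * (f(Suc k := \<sigma>)) j) = (\<Sum>j=1..k. int j * f j) + (int k + 1) * \<sigma>"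
    by (auto intro!: sum.cong)
  then have "r = (\<Sum>j=1..Suc k. int j * (f(Suc k := \<sigma>)) j)"
    using f(2) by (simp add: algebra_simps)
  moreover have "\<forall>j\<in>{1..Suc k}. (f(Suc k := \<sigma>)) j \<in> {-1, 0, 1}"
    using f(1) by (auto simp: \<sigma>_def sgn_if)
  ultimately show ?case by blast
qed

definition pow_fun :: "('a \<Rightarrow> complex) \<Rightarrow> nat \<Rightarrow> 'a \<Rightarrow> complex" where
  "pow_fun a n = (\<lambda>x. a x ^ n)"

lemma character_pow_fun: "character a \<Longrightarrow> character (pow_fun a n)"
  unfolding character_def pow_fun_def by (simp add: power_mult_distrib norm_power)

lemma pow_fun_cancel:
  assumes "\<forall>x. a x \<noteq> 0" "pow_fun a (i + p) = pow_fun a i"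
  shows "pow_fun a p = pow_fun a 0"
  using assms by (simp add: pow_fun_def fun_eq_iff power_add)

lemma prod_power_int_eq_power_int_sum:
  fixes z :: "'a::field"
  assumes "z \<noteq> 0"
  shows "(\<Prod>j\<in>A. z powi f j) = z powi (\<Sum>j\<in>A. f j)"
proof (induction A rule: infinite_finite_induct)
  case (insert j A)
  then show ?case by (simp add: power_int_add[OF disjI1[OF assms]])
qed simp_all

lemma power_int_mod_order:
  fixes z :: "'a::field"
  assumes "z \<noteq> 0" "z ^ p = 1"
  shows "z powi n = z powi (n mod int p)"
proof -
  have "z powi n = z powi (int p * (n div int p) + n mod int p)" by simp
  also have "\<dots> = (z powi int p) powi (n div int p) * z powi (n mod int p)"
    by (simp only: power_int_add[OF disjI1[OF assms(1)]] power_int_mult)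
  finally show ?thesis using assms(2) by simp
qed

lemma signed_products_powers:
  assumes "\<forall>x. a x \<noteq> 0" "inj_on (pow_fun a) {1..k}"
  shows "signed_products (pow_fun a ` {1..k}) =
    {(\<lambda>x. a x powi r) | r. 2 * \<bar>r\<bar> \<le> int k * (int k + 1)}"
proof -
  have power_sum: "(\<lambda>x. \<Prod>j\<in>{1..k}. (pow_fun a j x) powi (f j)) =
      (\<lambda>x. a x powi (\<Sum>j=1..k. int j * f j))" for f
    using assms(1) by (simp add: pow_fun_def power_int_power prod_power_int_eq_power_int_sum)
  have "signed_products (pow_fun a ` {1..k}) =
      {(\<lambda>x. a x powi (\<Sum>j=1..k. int j * f j)) | f. \<forall>j\<in>{1..k}. f j \<in> {-1, 0, 1}}"
    unfolding signed_products_image[OF assms(2)] power_sum ..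
  also have "\<dots> = {(\<lambda>x. a x powi r) | r. 2 * \<bar>r\<bar> \<le> int k * (int k + 1)}"
  proof (intro equalityI subsetI)
    fix s assume "s \<in> {(\<lambda>x. a x powi (\<Sum>j=1..k. int j * f j)) | f. \<forall>j\<in>{1..k}. f j \<in> {-1, 0, 1}}"
    then show "s \<in> {(\<lambda>x. a x powi r) | r. 2 * \<bar>r\<bar> \<le> int k * (int k + 1)}"
      using abs_signed_sum_le by blast
  next
    fix s assume "s \<in> {(\<lambda>x. a x powi r) | r. 2 * \<bar>r\<bar> \<le> int k * (int k + 1)}"
    then obtain r where r: "s = (\<lambda>x. a x powi r)" "2 * \<bar>r\<bar> \<le> int k * (int k + 1)"
      by blast
    obtain f where "\<forall>j\<in>{1..k}. f j \<in> {-1, 0, 1}" "r = (\<Sum>j=1..k. int j * f j)"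
      using ex_signed_sum_eq[OF r(2)] by blast
    then show "s \<in> {(\<lambda>x. a x powi (\<Sum>j=1..k. int j * f j)) | f. \<forall>j\<in>{1..k}. f j \<in> {-1, 0, 1}}"
      unfolding r(1) by (intro CollectI exI[of _ f]) simp
  qed
  finally show ?thesis .
qed

lemma maximal_power_chain:
  assumes "finite \<Lambda>"
  obtains k where "inj_on (pow_fun a) {0..k}" "pow_fun a ` {1..k} \<subseteq> \<Lambda>"
    "pow_fun a (Suc k) \<notin> \<Lambda> \<or> pow_fun a (Suc k) \<in> pow_fun a ` {0..k}"
proof -
  define fresh where
    "fresh j \<longleftrightarrow> pow_fun a (Suc j) \<in> \<Lambda> \<and> pow_fun a (Suc j) \<notin> pow_fun a ` {0..j}" for j
  have chain: "inj_on (pow_fun a) {0..k} \<and> pow_fun a ` {1..k} \<subseteq> \<Lambda>" if "\<forall>j<k. fresh j" for k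
  proof
    have new: "pow_fun a j \<in> \<Lambda> \<and> pow_fun a j \<notin> pow_fun a ` {0..j - 1}" if "1 \<le> j" "j \<le> k" for j
    proof -
      have "fresh (j - 1)" using \<open>\<forall>j<k. fresh j\<close> that by simp
      then show ?thesis using that by (simp add: fresh_def)
    qed
    have "pow_fun a i \<noteq> pow_fun a j" if "i < j" "j \<le> k" for i j
    proof -
      have "pow_fun a i \<in> pow_fun a ` {0..j - 1}" using that by simp
      moreover have "pow_fun a j \<notin> pow_fun a ` {0..j - 1}" using new[of j] that by simp
      ultimately show ?thesis by metis
    qed
    then show "inj_on (pow_fun a) {0..k}"
      unfolding inj_on_def by (metis atLeastAtMost_iff linorder_neqE_nat)
    show "pow_fun a ` {1..k} \<subseteq> \<Lambda>" using new by auto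
  qed
  have "\<exists>k. \<not> fresh k"
  proof (rule ccontr)
    assume "\<not> (\<exists>k. \<not> fresh k)"
    then have inj: "inj_on (pow_fun a) {1..Suc (card \<Lambda>)}"
      and sub: "pow_fun a ` {1..Suc (card \<Lambda>)} \<subseteq> \<Lambda>"
      using chain[of "Suc (card \<Lambda>)"] by (auto intro: inj_on_subset)
    have "card (pow_fun a ` {1..Suc (card \<Lambda>)}) = Suc (card \<Lambda>)"
      using card_image[OF inj] by simp
    moreover have "card (pow_fun a ` {1..Suc (card \<Lambda>)}) \<le> card \<Lambda>"
      by (rule card_mono[OF assms sub])
    ultimately show False by simp
  qed
  then obtain k where k: "\<not> fresh k" "\<forall>j<k. fresh j"
    using exists_least_iff[of "\<lambda>k. \<not> fresh k"] by blast
  then have "pow_fun a (Suc k) \<notin> \<Lambda> \<or> pow_fun a (Suc k) \<in> pow_fun a ` {0..k}"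
    unfolding fresh_def by blast
  then show thesis using that chain[OF k(2)] by blast
qed

lemma signed_products_split_powers:
  assumes "finite \<Lambda>" "\<forall>x. a x \<noteq> 0" "inj_on (pow_fun a) {1..k}" "pow_fun a ` {1..k} \<subseteq> \<Lambda>"
    "s \<in> signed_products \<Lambda>"
  obtains t r where "t \<in> signed_products (\<Lambda> - pow_fun a ` {1..k})"
    "2 * \<bar>r\<bar> \<le> int k * (int k + 1)" "s = (\<lambda>x. t x * a x powi r)"
proof -
  obtain t m where t: "t \<in> signed_products (\<Lambda> - pow_fun a ` {1..k})"
    and m: "m \<in> signed_products (pow_fun a ` {1..k})" and s: "s = (\<lambda>x. t x * m x)"
    using signed_products_split[OF assms(1,4,5)] .
  obtain r where "m = (\<lambda>x. a x powi r)" "2 * \<bar>r\<bar> \<le> int k * (int k + 1)"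
    using m signed_products_powers[OF assms(2,3)] by blast
  then show thesis using that[OF t] s by blast
qed

lemma signed_products_extend_fresh:
  assumes "finite \<Lambda>" "\<forall>x. a x \<noteq> 0" "inj_on (pow_fun a) {1..Suc k}"
    "pow_fun a ` {1..k} \<subseteq> \<Lambda>" "pow_fun a (Suc k) \<notin> \<Lambda>"
    "s \<in> signed_products \<Lambda>" "e \<in> {-1, 0, 1}"
  shows "(\<lambda>x. s x * a x powi e) \<in> signed_products (insert (pow_fun a (Suc k)) \<Lambda>)"
proof -
  define C where "C = pow_fun a ` {1..k}"
  have inj_C: "inj_on (pow_fun a) {1..k}" using assms(3) by (rule inj_on_subset) auto
  obtain t r where t: "t \<in> signed_products (\<Lambda> - C)"
    and r: "2 * \<bar>r\<bar> \<le> int k * (int k + 1)" and s: "s = (\<lambda>x. t x * a x powi r)"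
    using signed_products_split_powers[OF assms(1,2) inj_C assms(4,6)] unfolding C_def .
  have "\<bar>r + e\<bar> \<le> \<bar>r\<bar> + 1" using assms(7) by auto
  then have "2 * \<bar>r + e\<bar> \<le> int (Suc k) * (int (Suc k) + 1)" using r by (simp add: algebra_simps)
  then have "(\<lambda>x. a x powi (r + e)) \<in> signed_products (pow_fun a ` {1..Suc k})"
    using signed_products_powers[OF assms(2,3)] by blast
  moreover have "pow_fun a ` {1..Suc k} = insert (pow_fun a (Suc k)) C"
    by (auto simp: C_def atLeastAtMostSuc_conv)
  ultimately have power: "(\<lambda>x. a x powi (r + e)) \<in> signed_products (insert (pow_fun a (Suc k)) C)"
    by simp
  have "(\<Lambda> - C) \<inter> insert (pow_fun a (Suc k)) C = {}" using assms(5) by auto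
  then have "(\<lambda>x. t x * a x powi (r + e)) \<in>
      signed_products ((\<Lambda> - C) \<union> insert (pow_fun a (Suc k)) C)"
    using signed_products_mult[OF _ _ _ t power] assms(1) by (simp add: C_def)
  moreover have "(\<Lambda> - C) \<union> insert (pow_fun a (Suc k)) C = insert (pow_fun a (Suc k)) \<Lambda>"
    using assms(4) by (auto simp: C_def)
  moreover have "(\<lambda>x. s x * a x powi e) = (\<lambda>x. t x * a x powi (r + e))"
    using assms(2) by (simp add: s fun_eq_iff power_int_add mult.assoc)
  ultimately show ?thesis by simp
qed

lemma signed_products_extend_torsion:
  assumes "finite \<Lambda>" "\<forall>x. a x \<noteq> 0" "inj_on (pow_fun a) {1..k}" "pow_fun a ` {1..k} \<subseteq> \<Lambda>"
    "\<And>x. a x ^ Suc k = 1" "s \<in> signed_products \<Lambda>"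
  shows "(\<lambda>x. s x * a x powi e) \<in> signed_products \<Lambda>"
proof -
  define C where "C = pow_fun a ` {1..k}"
  obtain t r where t: "t \<in> signed_products (\<Lambda> - C)" and s: "s = (\<lambda>x. t x * a x powi r)"
    using signed_products_split_powers[OF assms(1-4,6)] unfolding C_def .
  define q where "q = (r + e) mod int (Suc k)"
  have "0 \<le> q" "q < int (Suc k)" unfolding q_def by simp_all
  moreover have "2 * int k \<le> int k * (int k + 1)"
    by (cases k) (simp_all add: algebra_simps)
  ultimately have "2 * \<bar>q\<bar> \<le> int k * (int k + 1)" by simp
  then have power: "(\<lambda>x. a x powi q) \<in> signed_products C"
    using signed_products_powers[OF assms(2,3)] unfolding C_def by blast
  have "(\<lambda>x. t x * a x powi q) \<in> signed_products ((\<Lambda> - C) \<union> C)"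
    by (rule signed_products_mult[OF _ _ _ t power]) (use assms(1) in \<open>auto simp: C_def\<close>)
  moreover have "(\<Lambda> - C) \<union> C = \<Lambda>" using assms(4) by (auto simp: C_def)
  moreover have "a x powi (r + e) = a x powi q" for x
    unfolding q_def by (rule power_int_mod_order[OF assms(2)[rule_format] assms(5)])
  then have "(\<lambda>x. s x * a x powi e) = (\<lambda>x. t x * a x powi q)"
    using assms(2) by (simp add: s fun_eq_iff mult.assoc flip: power_int_add)
  ultimately show ?thesis by simp
qed

lemma signed_products_extend:
  assumes "finite \<Lambda>" "\<forall>x. a x \<noteq> 0"
  obtains n where "\<And>s e. s \<in> signed_products \<Lambda> \<Longrightarrow> e \<in> {-1, 0, 1} \<Longrightarrow>
    (\<lambda>x. s x * a x powi e) \<in> signed_products (insert (pow_fun a n) \<Lambda>)"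
proof -
  obtain k where inj: "inj_on (pow_fun a) {0..k}" and chain: "pow_fun a ` {1..k} \<subseteq> \<Lambda>"
    and stop: "pow_fun a (Suc k) \<notin> \<Lambda> \<or> pow_fun a (Suc k) \<in> pow_fun a ` {0..k}"
    using maximal_power_chain[OF assms(1)] by blast
  have inj_chain: "inj_on (pow_fun a) {1..k}" using inj by (rule inj_on_subset) auto
  show thesis
  proof (cases "pow_fun a (Suc k) \<in> pow_fun a ` {0..k}")
    case False
    then have "inj_on (pow_fun a) {1..Suc k}"
      using inj_chain by (auto simp: atLeastAtMostSuc_conv)
    then show thesis
      using that signed_products_extend_fresh[OF assms _ chain] False stop by blast
  next
    case True
    then obtain i where "i \<le> k" "pow_fun a (Suc k) = pow_fun a i" by auto
    then have "pow_fun a (Suc k - i) = pow_fun a 0"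
      using pow_fun_cancel[OF assms(2), of i "Suc k - i"] by simp
    have "i = 0"
    proof (rule ccontr)
      assume "i \<noteq> 0"
      then have "Suc k - i \<in> {0..k}" "Suc k - i \<noteq> 0" using \<open>i \<le> k\<close> by auto
      then show False
        using inj_onD[OF inj \<open>pow_fun a (Suc k - i) = pow_fun a 0\<close>] by auto
    qed
    then have "a x ^ Suc k = 1" for x
      using \<open>pow_fun a (Suc k) = pow_fun a i\<close> by (simp add: pow_fun_def fun_eq_iff)
    then have "(\<lambda>x. s x * a x powi e) \<in> signed_products \<Lambda>" if "s \<in> signed_products \<Lambda>" for s e
      using signed_products_extend_torsion[OF assms inj_chain chain _ that] by blast
    then show thesis
      using that signed_products_mono[OF _ subset_insertI] assms(1) by blast
  qed
qed

lemma d_covered_subset: "S \<subseteq> T \<Longrightarrow> d_covered d T \<Longrightarrow> d_covered d S"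
  unfolding d_covered_def covered_by_def by blast

lemma d_covered_signed_monomials:
  assumes "\<forall>i<n. character (U i)"
  shows "d_covered n (signed_monomials U n)"
  using assms
proof (induction n)
  case 0
  have "(\<lambda>x. 1) \<in> signed_products {}" unfolding signed_products_def by simp
  then show ?case
    unfolding d_covered_def covered_by_iff_subset_signed_products by (intro exI[of _ "{}"]) simp
next
  case (Suc n)
  then obtain \<Lambda> where \<Lambda>: "finite \<Lambda>" "card \<Lambda> \<le> n" "\<forall>l\<in>\<Lambda>. character l"
    "signed_monomials U n \<subseteq> signed_products \<Lambda>"
    unfolding d_covered_def covered_by_iff_subset_signed_products by auto
  have u: "character (U n)" using Suc.prems by simp
  then have "\<forall>x. U n x \<noteq> 0" using character_nonzero by blast
  then obtain k where extend: "\<And>s e. s \<in> signed_products \<Lambda> \<Longrightarrow> e \<in> {-1, 0, 1} \<Longrightarrow>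
      (\<lambda>x. s x * U n x powi e) \<in> signed_products (insert (pow_fun (U n) k) \<Lambda>)"
    using signed_products_extend[OF \<Lambda>(1)] by blast
  have "card (insert (pow_fun (U n) k) \<Lambda>) \<le> Suc n"
    using \<Lambda>(1,2) by (simp add: card_insert_if)
  moreover have "\<forall>l\<in>insert (pow_fun (U n) k) \<Lambda>. character l"
    using \<Lambda>(3) character_pow_fun[OF u] by blast
  moreover have "v \<in> signed_products (insert (pow_fun (U n) k) \<Lambda>)"
    if v: "v \<in> signed_monomials U (Suc n)" for v
  proof -
    obtain w e where "w \<in> signed_monomials U n" "e \<in> {-1, 0, 1}" "v = (\<lambda>x. w x * U n x powi e)"
      using v by auto
    then show ?thesis using extend[OF subsetD[OF \<Lambda>(4)]] by simp
  qed
  ultimately show ?case using \<Lambda>(1)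
    unfolding d_covered_def covered_by_iff_subset_signed_products by blast
qed

lemma riesz_product_trinomials:
  assumes "riesz_product d R"
  obtains U c c' where "\<forall>i<d. character (U i)"
    "(\<lambda>x. complex_of_real (R x)) = (\<lambda>x. \<Prod>i<d. 1 + c i * U i x + c' i * U i x powi -1)"
proof -
  obtain \<phi> :: "nat \<Rightarrow> 'a \<Rightarrow> real" and \<epsilon> :: "nat \<Rightarrow> int" where
    \<phi>: "\<forall>i<d. \<phi> i \<in> riesz_family" and R: "R = (\<lambda>x. \<Prod>i<d. 1 + of_int (\<epsilon> i) * \<phi> i x)"
    using assms unfolding riesz_product_def by blast
  let ?factor = "\<lambda>i u c c'. character u \<and>
    (\<forall>x. complex_of_real (1 + of_int (\<epsilon> i) * \<phi> i x) = 1 + c * u x + c' * u x powi -1)"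
  have "\<forall>i\<in>{..<d}. \<exists>u c c'. ?factor i u c c'"
  proof
    fix i assume "i \<in> {..<d}"
    then obtain u c c' where "character u"
      "\<And>x. complex_of_real (1 + of_int (\<epsilon> i) * \<phi> i x) = 1 + c * u x + c' * u x powi -1"
      using riesz_family_trinomial \<phi> by blast
    then show "\<exists>u c c'. ?factor i u c c'" by blast
  qed
  from bchoice[OF this] obtain U where "\<forall>i\<in>{..<d}. \<exists>c c'. ?factor i (U i) c c'" ..
  from bchoice[OF this] obtain c where "\<forall>i\<in>{..<d}. \<exists>c'. ?factor i (U i) (c i) c'" ..
  from bchoice[OF this] obtain c' where factors: "\<forall>i\<in>{..<d}. ?factor i (U i) (c i) (c' i)" ..
  show thesis
  proof (rule that)
    show "\<forall>i<d. character (U i)" using factors by simp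
    show "(\<lambda>x. complex_of_real (R x)) = (\<lambda>x. \<Prod>i<d. 1 + c i * U i x + c' i * U i x powi -1)"
      using factors by (simp add: R of_real_prod add.assoc)
  qed
qed

lemma spec0_riesz_product:
  assumes "riesz_product d R"
  obtains U where "\<forall>i<d. character (U i)" "spec0 R \<subseteq> signed_monomials U d"
proof -
  obtain U c c' where U: "\<forall>i<d. character (U i)"
    and R: "(\<lambda>x. complex_of_real (R x)) = (\<lambda>x. \<Prod>i<d. 1 + c i * U i x + c' i * U i x powi -1)"
    using riesz_product_trinomials[OF assms] .
  have "v \<in> signed_monomials U d" if "v \<in> spec0 R" for v
    using that fourier_prod_trinomials[OF U] unfolding spec0_def R by blast
  then show thesis using that[OF U] by blast
qed

theorem lemma3p1:
  fixes R :: "'a::{finite,ab_group_add} \<Rightarrow> real" and d :: nat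
  assumes "riesz_product d R"
  shows "d_covered d (spec0 R)"
proof -
  obtain U where "\<forall>i<d. character (U i)" "spec0 R \<subseteq> signed_monomials U d"
    using spec0_riesz_product[OF assms] .
  then show ?thesis using d_covered_subset d_covered_signed_monomials by blast
qed

end
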